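(* Let $\mathcal S$ be a nonempty set of vertices and $o$ a vertex such that at least one $c\in\mathcal S$ has a directed path to $o$. Let $\delta_{\min}=\min_{c\in\mathcal S}\delta_{co}$. Assume the open loop $M(s)$ is strictly proper with relative degree $\chi=\deg(ap)-\deg(bq)\ge1$. Then the transfer function $$T_{\mathcal S o}(s)=e_o^T\big(I+M(s)L\big)^{-1}M(s)\sum_{c\in\mathcal S}e_c,$$ from a common input fed to all nodes of $\mathcal S$ to $y_o$, has relative degree $(\delta_{\min}+1)\chi$.
   Context: $\mathcal G$ is a weighted directed graph on $\{1,\dots,N\}$ with adjacency matrix $A=[a_{ij}]$. Here $a_{ij}>0$ if there is an arc from $j$ to $i$ and $a_{ij}=0$ otherwise (no self-loops). The Laplacian is $L=D-A$ with $D=\mathrm{diag}(\sum_j a_{ij})$. A directed path from $u$ to $w$ is a sequence of distinct vertices $u=v_0,\dots,v_\ell=w$ with an arc from $v_k$ to $v_{k+1}$ for each $k$, and $\ell$ is its length. $\delta_{uw}$ is the length of a shortest directed path from $u$ to $w$; it is $\infty$ if none exists. $e_i$ is the $i$-th canonical basis vector. $a,b,p,q$ are nonzero real polynomials and $M(s)=\frac{b(s)q(s)}{a(s)p(s)}$. The relative degree of a rational function is the degree of its denominator minus the degree of its numerator. *)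

theory Defs
  imports "HOL-Computational_Algebra.Polynomial" "HOL-Computational_Algebra.Fraction_Field"
          "HOL-Library.Extended_Nat"
          "Jordan_Normal_Form.Gauss_Jordan_Elimination"
begin

text \<open>Vertices are 0..<N (the paper uses 1..N). The adjacency matrix is a function
  A :: nat => nat => real; A i j > 0 iff there is an arc from j to i.\<close>

definition arc :: "(nat \<Rightarrow> nat \<Rightarrow> real) \<Rightarrow> nat \<Rightarrow> nat \<Rightarrow> bool" where
  "arc A j i \<longleftrightarrow> A i j > 0"

text \<open>A directed path given as its list of vertices v0, ..., vl (distinct), length l = length - 1.\<close>
definition is_dpath :: "nat \<Rightarrow> (nat \<Rightarrow> nat \<Rightarrow> real) \<Rightarrow> nat list \<Rightarrow> bool" where
  "is_dpath N A vs \<longleftrightarrow> vs \<noteq> [] \<and> distinct vs \<and> set vs \<subseteq> {..<N} \<and>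
     (\<forall>k. Suc k < length vs \<longrightarrow> arc A (vs ! k) (vs ! Suc k))"

definition dist_path :: "nat \<Rightarrow> (nat \<Rightarrow> nat \<Rightarrow> real) \<Rightarrow> nat \<Rightarrow> nat \<Rightarrow> enat" where
  "dist_path N A u w = Inf {enat (length vs - 1) | vs. is_dpath N A vs \<and> hd vs = u \<and> last vs = w}"

definition laplacian :: "nat \<Rightarrow> (nat \<Rightarrow> nat \<Rightarrow> real) \<Rightarrow> real mat" where
  "laplacian N A = mat N N (\<lambda>(i,j). (if i = j then (\<Sum>k<N. A i k) else 0) - A i j)"

type_synonym ratfun = "real poly fract"

definition const_rf :: "real \<Rightarrow> ratfun" where
  "const_rf x = Fract [:x:] 1"

text \<open>Relative degree: degree of denominator minus degree of numerator
  (independent of the chosen representation; meaningful for nonzero r).\<close>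
definition rel_degree :: "ratfun \<Rightarrow> int" where
  "rel_degree r = (THE d. \<exists>n m. m \<noteq> 0 \<and> n \<noteq> 0 \<and> r = Fract n m \<and>
                         d = int (degree m) - int (degree n))"

end

theory Submission
  imports Defs "Jordan_Normal_Form.Determinant"
begin

text \<open>Relative degree is the valuation at infinity of the field of real rational functions.
  Since \<open>M\<close> has relative degree \<open>\<chi> \<ge> 1\<close>, the equation \<open>w = M u - M L w\<close> for
  \<open>w = (I + M L)\<^sup>-\<^sup>1 M u\<close> shows, by looking at an entry of \<open>w\<close> of least relative degree,
  that every entry of \<open>w\<close> has relative degree at least that of \<open>M u\<close>; with \<open>u = 0\<close> this
  gives invertibility of \<open>I + M L\<close>. Substituting the equation into itself yields the
  Neumann expansion \<open>w = \<Sum>k\<le>K. (-1)\<^sup>k M\<^sup>k\<^sup>+\<^sup>1 L\<^sup>k u\<close> up to an error of relative degree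
  at least \<open>(K + 2) \<chi>\<close>. Because \<open>-L\<close> has nonnegative off-diagonal entries, \<open>(L\<^sup>k)\<^sub>o\<^sub>c\<close>
  vanishes for \<open>k < \<delta>\<^sub>c\<^sub>o\<close> and has sign \<open>(-1)\<^sup>k\<close> and is nonzero for \<open>k = \<delta>\<^sub>c\<^sub>o\<close>.
  So the first nonzero term of the expansion of \<open>w\<^sub>o\<close> is the one with \<open>k = \<delta>\<^sub>m\<^sub>i\<^sub>n\<close>, whose
  coefficient \<open>(L\<^sup>\<delta> u)\<^sub>o\<close> is a sum of terms of equal sign, not all zero; it has relative
  degree \<open>(\<delta>\<^sub>m\<^sub>i\<^sub>n + 1) \<chi>\<close> and dominates the rest.\<close>

section \<open>Relative degree of rational functions\<close>

lemma Fract_eq_0_iff: "d \<noteq> 0 \<Longrightarrow> Fract n d = 0 \<longleftrightarrow> n = 0"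
  by (simp add: Zero_fract_def eq_fract)

lemma rel_degree_Fract:
  assumes "n \<noteq> 0" "d \<noteq> 0"
  shows "rel_degree (Fract n d) = int (degree d) - int (degree n)"
  unfolding rel_degree_def
proof (rule the_equality)
  fix e assume "\<exists>n' m. m \<noteq> 0 \<and> n' \<noteq> 0 \<and> Fract n d = Fract n' m \<and>
                       e = int (degree m) - int (degree n')"
  then obtain n' m where h: "m \<noteq> 0" "n' \<noteq> 0" "Fract n d = Fract n' m"
      "e = int (degree m) - int (degree n')" by blast
  have "n * m = n' * d" using h assms eq_fract(1) by blast
  hence "degree n + degree m = degree n' + degree d"
    using h assms by (metis degree_mult_eq)
  thus "e = int (degree d) - int (degree n)" using h by simp
qed (use assms in blast)

lemma rel_degree_mult:
  assumes "r \<noteq> 0" "s \<noteq> 0"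
  shows "rel_degree (r * s) = rel_degree r + rel_degree s"
proof -
  obtain n1 d1 where "r = Fract n1 d1" "d1 \<noteq> 0" "n1 \<noteq> 0"
    using assms(1) by (cases r rule: Fract_cases_nonzero) auto
  moreover obtain n2 d2 where "s = Fract n2 d2" "d2 \<noteq> 0" "n2 \<noteq> 0"
    using assms(2) by (cases s rule: Fract_cases_nonzero) auto
  ultimately show ?thesis by (simp add: rel_degree_Fract degree_mult_eq)
qed

lemma rel_degree_1 [simp]: "rel_degree 1 = 0"
  using rel_degree_Fract[of 1 1] by (simp add: One_fract_def)

lemma rel_degree_power: "r \<noteq> 0 \<Longrightarrow> rel_degree (r ^ n) = int n * rel_degree r"
  by (induction n) (simp_all add: rel_degree_mult algebra_simps)

lemma rel_degree_uminus: "rel_degree (- r) = rel_degree r"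
  by (cases r rule: Fract_cases_nonzero) (simp_all add: rel_degree_Fract)

lemma rel_degree_const_rf: "c \<noteq> 0 \<Longrightarrow> rel_degree (const_rf c) = 0"
  by (simp add: const_rf_def rel_degree_Fract)

lemma const_rf_eq_0_iff [simp]: "const_rf c = 0 \<longleftrightarrow> c = 0"
  by (simp add: const_rf_def Fract_eq_0_iff)

lemma const_rf_mult: "const_rf (x * y) = const_rf x * const_rf y"
  by (simp add: const_rf_def mult.commute)

lemma const_rf_0 [simp]: "const_rf 0 = 0"
  by (simp add: const_rf_def Zero_fract_def)

lemma const_rf_1 [simp]: "const_rf 1 = 1"
  by (simp add: const_rf_def One_fract_def one_pCons)

lemma const_rf_add: "const_rf (x + y) = const_rf x + const_rf y"
  by (simp add: const_rf_def)

lemma const_rf_sum: "const_rf (sum f I) = (\<Sum>i\<in>I. const_rf (f i))"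
proof (induction I rule: infinite_finite_induct)
  case (insert x F)
  then show ?case by (simp add: const_rf_add)
qed simp_all

text \<open>\<open>rel_degree 0\<close> is a junk value, so \<open>0\<close> is declared to satisfy every bound.\<close>

definition rel_degree_ge :: "ratfun \<Rightarrow> int \<Rightarrow> bool" where
  "rel_degree_ge r k \<longleftrightarrow> r = 0 \<or> k \<le> rel_degree r"

lemma rel_degree_ge_0 [simp]: "rel_degree_ge 0 k"
  by (simp add: rel_degree_ge_def)

lemma rel_degree_geD: "rel_degree_ge r k \<Longrightarrow> r \<noteq> 0 \<Longrightarrow> k \<le> rel_degree r"
  by (simp add: rel_degree_ge_def)

lemma rel_degree_ge_mono: "rel_degree_ge r k \<Longrightarrow> k' \<le> k \<Longrightarrow> rel_degree_ge r k'"
  by (auto simp: rel_degree_ge_def)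

lemma rel_degree_ge_Fract:
  "d \<noteq> 0 \<Longrightarrow> rel_degree_ge (Fract n d) k \<longleftrightarrow> n = 0 \<or> int (degree n) + k \<le> int (degree d)"
  by (cases "n = 0") (auto simp: rel_degree_ge_def Fract_eq_0_iff rel_degree_Fract)

lemma rel_degree_ge_const_rf: "rel_degree_ge (const_rf c) 0"
  by (simp add: const_rf_def rel_degree_ge_Fract)

lemma rel_degree_ge_uminus: "rel_degree_ge r k \<Longrightarrow> rel_degree_ge (- r) k"
  by (simp add: rel_degree_ge_def rel_degree_uminus)

lemma rel_degree_ge_add:
  assumes "rel_degree_ge r k" "rel_degree_ge s k"
  shows "rel_degree_ge (r + s) k"
proof -
  obtain n1 d1 where r: "r = Fract n1 d1" "d1 \<noteq> 0" by (cases r)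
  obtain n2 d2 where s: "s = Fract n2 d2" "d2 \<noteq> 0" by (cases s)
  have 1: "n1 = 0 \<or> int (degree (n1 * d2)) + k \<le> int (degree (d1 * d2))"
    using assms(1) r s by (cases "n1 = 0") (auto simp: rel_degree_ge_Fract degree_mult_eq)
  have 2: "n2 = 0 \<or> int (degree (n2 * d1)) + k \<le> int (degree (d1 * d2))"
    using assms(2) r s by (cases "n2 = 0") (auto simp: rel_degree_ge_Fract degree_mult_eq)
  have "degree (n1 * d2 + n2 * d1) \<le> max (degree (n1 * d2)) (degree (n2 * d1))"
    by (rule degree_add_le_max)
  with 1 2 have "n1 * d2 + n2 * d1 = 0 \<or>
      int (degree (n1 * d2 + n2 * d1)) + k \<le> int (degree (d1 * d2))"
    by auto
  thus ?thesis using r s by (simp add: rel_degree_ge_Fract)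
qed

lemma rel_degree_ge_diff: "rel_degree_ge r k \<Longrightarrow> rel_degree_ge s k \<Longrightarrow> rel_degree_ge (r - s) k"
  using rel_degree_ge_add[of r k "- s"] rel_degree_ge_uminus by simp

lemma rel_degree_ge_mult:
  assumes "rel_degree_ge r k" "rel_degree_ge s l"
  shows "rel_degree_ge (r * s) (k + l)"
  using assms rel_degree_mult[of r s] by (cases "r = 0 \<or> s = 0") (auto simp: rel_degree_ge_def)

lemma rel_degree_ge_sum:
  "(\<And>i. i \<in> I \<Longrightarrow> rel_degree_ge (f i) k) \<Longrightarrow> rel_degree_ge (sum f I) k"
  by (induction I rule: infinite_finite_induct) (auto intro: rel_degree_ge_add)

lemma rel_degree_add_dominated:
  assumes "r \<noteq> 0" "rel_degree_ge s k" "rel_degree r < k"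
  shows "r + s \<noteq> 0 \<and> rel_degree (r + s) = rel_degree r"
proof (cases "s = 0")
  case False
  obtain n1 d1 where r: "r = Fract n1 d1" "d1 \<noteq> 0" "n1 \<noteq> 0"
    using assms(1) by (cases r rule: Fract_cases_nonzero) auto
  obtain n2 d2 where s: "s = Fract n2 d2" "d2 \<noteq> 0" "n2 \<noteq> 0"
    using False by (cases s rule: Fract_cases_nonzero) auto
  have "rel_degree r < rel_degree s" using assms(2,3) False rel_degree_geD by fastforce
  hence lt: "degree (n2 * d1) < degree (n1 * d2)"
    using r s by (simp add: rel_degree_Fract degree_mult_eq)
  hence deg: "degree (n1 * d2 + n2 * d1) = degree (n1 * d2)" by (rule degree_add_eq_left)
  have "n1 * d2 + n2 * d1 \<noteq> 0"
    using deg lt by (metis degree_0 not_less_zero)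
  moreover have "r + s = Fract (n1 * d2 + n2 * d1) (d1 * d2)" using r s by simp
  ultimately show ?thesis using deg r s by (simp add: rel_degree_Fract Fract_eq_0_iff degree_mult_eq)
qed (use assms in simp)

section \<open>Shortest path distance\<close>

lemma dist_path_le:
  "is_dpath N A vs \<Longrightarrow> hd vs = j \<Longrightarrow> last vs = i \<Longrightarrow> dist_path N A j i \<le> enat (length vs - 1)"
  unfolding dist_path_def by (rule Inf_lower) blast

lemma dist_path_attained:
  assumes "dist_path N A j i \<noteq> \<infinity>"
  obtains vs where "is_dpath N A vs" "hd vs = j" "last vs = i"
    "dist_path N A j i = enat (length vs - 1)"
proof -
  let ?X = "{enat (length vs - 1) | vs. is_dpath N A vs \<and> hd vs = j \<and> last vs = i}"
  have "?X \<noteq> {}"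
    using assms unfolding dist_path_def by (metis Inf_empty top_enat_def)
  hence "Inf ?X \<in> ?X"
    unfolding Inf_enat_def by (auto intro: LeastI)
  thus ?thesis using that unfolding dist_path_def by auto
qed

lemma is_dpath_take:
  assumes "is_dpath N A vs" "0 < n" "n \<le> length vs"
  shows "is_dpath N A (take n vs)" "hd (take n vs) = hd vs" "last (take n vs) = vs ! (n - 1)"
  using assms
  by (auto simp: is_dpath_def distinct_take last_conv_nth hd_conv_nth dest: in_set_takeD)

lemma dist_path_refl: "j < N \<Longrightarrow> dist_path N A j j = 0"
  using dist_path_le[of N A "[j]" j j] by (simp add: is_dpath_def zero_enat_def[symmetric])

lemma dist_path_eq_0D:
  assumes "dist_path N A j i = 0"
  shows "i = j"
proof -
  obtain vs where vs: "is_dpath N A vs" "hd vs = j" "last vs = i" "length vs - 1 = 0"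
    using assms by (metis dist_path_attained zero_enat_def enat.inject infinity_ne_i0)
  hence "vs = [j]" by (cases vs) (auto simp: is_dpath_def)
  thus ?thesis using vs by simp
qed

lemma dist_path_arc:
  assumes "l < N" "i < N" "A i l > 0"
  shows "dist_path N A j i \<le> eSuc (dist_path N A j l)"
proof (cases "dist_path N A j l = \<infinity>")
  case False
  then obtain vs where vs: "is_dpath N A vs" "hd vs = j" "last vs = l"
      "dist_path N A j l = enat (length vs - 1)"
    by (rule dist_path_attained)
  have "vs \<noteq> []" using vs by (simp add: is_dpath_def)
  show ?thesis
  proof (cases "i \<in> set vs")
    case True
    then obtain n where n: "n < length vs" "vs ! n = i" by (auto simp: in_set_conv_nth)
    have "dist_path N A j i \<le> enat (length (take (Suc n) vs) - 1)"
      using is_dpath_take[OF vs(1), of "Suc n"] n vs by (intro dist_path_le) auto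
    also have "\<dots> \<le> eSuc (dist_path N A j l)" using n vs by (simp add: eSuc_enat)
    finally show ?thesis .
  next
    case False
    have "arc A ((vs @ [i]) ! k) ((vs @ [i]) ! Suc k)" if k: "Suc k < length (vs @ [i])" for k
    proof (cases "Suc k < length vs")
      case True
      thus ?thesis using vs by (simp add: nth_append is_dpath_def)
    next
      case False
      hence "k = length vs - 1" "Suc k = length vs" using k \<open>vs \<noteq> []\<close> by auto
      hence "(vs @ [i]) ! k = l" "(vs @ [i]) ! Suc k = i"
        using vs \<open>vs \<noteq> []\<close> by (auto simp: nth_append last_conv_nth)
      thus ?thesis using assms by (simp add: arc_def)
    qed
    hence "is_dpath N A (vs @ [i])"
      using vs False assms by (auto simp: is_dpath_def)
    hence "dist_path N A j i \<le> enat (length (vs @ [i]) - 1)"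
      using vs \<open>vs \<noteq> []\<close> by (intro dist_path_le) auto
    thus ?thesis using vs \<open>vs \<noteq> []\<close> by (simp add: eSuc_enat)
  qed
qed simp

lemma dist_path_predecessor:
  assumes "dist_path N A j i = enat (Suc k)"
  obtains l where "l < N" "A i l > 0" "dist_path N A j l = enat k"
proof -
  obtain vs where vs: "is_dpath N A vs" "hd vs = j" "last vs = i" "length vs - 1 = Suc k"
    using assms by (metis dist_path_attained enat.inject enat.simps(3))
  have len: "length vs = Suc (Suc k)" using vs by (simp add: is_dpath_def)
  define l where "l = vs ! k"
  have "l \<in> set vs" "i \<in> set vs" using vs len unfolding l_def
    by (auto intro!: last_in_set simp del: length_greater_0_conv)
  hence lN: "l < N" and iN: "i < N" using vs unfolding is_dpath_def by auto
  have "vs ! Suc k = i"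
    using vs len last_conv_nth[of vs] by fastforce
  hence Ail: "A i l > 0" using vs len unfolding is_dpath_def l_def arc_def by auto
  have "dist_path N A j l \<le> enat k"
    using is_dpath_take[OF vs(1), of "Suc k"] len vs dist_path_le[of N A "take (Suc k) vs" j l]
    by (simp add: l_def)
  moreover have "enat (Suc k) \<le> eSuc (dist_path N A j l)"
    using dist_path_arc[of l N i A j] lN iN Ail assms by simp
  ultimately have "dist_path N A j l = enat k"
    by (simp add: eSuc_enat[symmetric] del: eSuc_enat)
  with lN Ail show ?thesis by (rule that)
qed

lemma Min_dist_path_attained:
  assumes "finite S" "\<exists>c\<in>S. dist_path N A c ov < \<infinity>"
  obtains \<delta> c0 where "Min ((\<lambda>c. dist_path N A c ov) ` S) = enat \<delta>"
    "\<And>c. c \<in> S \<Longrightarrow> enat \<delta> \<le> dist_path N A c ov" "c0 \<in> S" "dist_path N A c0 ov = enat \<delta>"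
proof -
  let ?D = "(\<lambda>c. dist_path N A c ov) ` S"
  have "S \<noteq> {}" using assms(2) by blast
  hence "Min ?D \<in> ?D" using assms(1) by (intro Min_in) auto
  then obtain c0 where c0: "c0 \<in> S" "dist_path N A c0 ov = Min ?D" by auto
  obtain c1 where "c1 \<in> S" "dist_path N A c1 ov < \<infinity>" using assms(2) by blast
  hence "Min ?D < \<infinity>" using assms(1) by (meson Min_le finite_imageI imageI order.strict_trans1)
  then obtain \<delta> where \<delta>: "Min ?D = enat \<delta>" by (cases "Min ?D") auto
  show ?thesis
  proof (rule that[OF \<delta> _ c0(1)])
    show "enat \<delta> \<le> dist_path N A c ov" if "c \<in> S" for c
      using that assms(1) \<delta> by (metis Min_le finite_imageI imageI)
  qed (use c0 \<delta> in simp)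
qed

section \<open>Entries of powers of the Laplacian\<close>

definition laplacian_entry :: "nat \<Rightarrow> (nat \<Rightarrow> nat \<Rightarrow> real) \<Rightarrow> nat \<Rightarrow> nat \<Rightarrow> real" where
  "laplacian_entry N A i l = (if i = l then (\<Sum>k<N. A i k) else 0) - A i l"

fun lap_pow :: "nat \<Rightarrow> (nat \<Rightarrow> nat \<Rightarrow> real) \<Rightarrow> nat \<Rightarrow> nat \<Rightarrow> nat \<Rightarrow> real" where
  "lap_pow N A 0 i j = (if i = j then 1 else 0)"
| "lap_pow N A (Suc k) i j = (\<Sum>l<N. laplacian_entry N A i l * lap_pow N A k l j)"

lemma laplacian_entry_off_diag: "l \<noteq> i \<Longrightarrow> laplacian_entry N A i l = - A i l"
  by (simp add: laplacian_entry_def)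

lemma lap_pow_eq_0_below_dist:
  assumes A_nonneg: "\<And>i j. i < N \<Longrightarrow> j < N \<Longrightarrow> A i j \<ge> 0"
  shows "i < N \<Longrightarrow> enat k < dist_path N A j i \<Longrightarrow> lap_pow N A k i j = 0"
proof (induction k arbitrary: i)
  case 0
  then show ?case using dist_path_refl[of i N A] by auto
next
  case (Suc k)
  have "laplacian_entry N A i l * lap_pow N A k l j = 0" if l: "l < N" for l
  proof -
    consider "l = i" | "l \<noteq> i" "A i l = 0" | "A i l > 0"
      using A_nonneg[OF Suc.prems(1) l] by fastforce
    then show ?thesis
    proof cases
      case 1
      have "enat k < dist_path N A j i" using Suc.prems(2) by (meson Suc_ile_eq order_less_imp_le)
      thus ?thesis using 1 Suc by simp
    next
      case 2
      thus ?thesis by (simp add: laplacian_entry_off_diag)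
    next
      case 3
      have "eSuc (enat k) < dist_path N A j i" using Suc.prems(2) by (simp add: eSuc_enat)
      also have "\<dots> \<le> eSuc (dist_path N A j l)"
        using dist_path_arc[of l N i A j] l Suc.prems(1) 3 by simp
      finally show ?thesis using Suc.IH[OF l] by simp
    qed
  qed
  then show ?case by (simp add: sum.neutral)
qed

lemma lap_pow_Suc_term_nonneg:
  assumes A_nonneg: "\<And>i j. i < N \<Longrightarrow> j < N \<Longrightarrow> A i j \<ge> 0"
    and i: "i < N" and l: "l < N" and dist: "enat (Suc k) \<le> dist_path N A j i"
    and nonneg: "enat k \<le> dist_path N A j l \<Longrightarrow> (-1) ^ k * lap_pow N A k l j \<ge> 0"
  shows "(-1) ^ Suc k * (laplacian_entry N A i l * lap_pow N A k l j) \<ge> 0"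
proof -
  consider "l = i" | "l \<noteq> i" "A i l = 0" | "l \<noteq> i" "A i l > 0"
    using A_nonneg[OF i l] by fastforce
  then show ?thesis
  proof cases
    case 1
    have "enat k < dist_path N A j i" using dist by (simp add: Suc_ile_eq)
    thus ?thesis using 1 lap_pow_eq_0_below_dist[OF A_nonneg i] by simp
  next
    case 2
    thus ?thesis by (simp add: laplacian_entry_off_diag)
  next
    case 3
    have "eSuc (enat k) \<le> dist_path N A j i" using dist by (simp add: eSuc_enat)
    also have "\<dots> \<le> eSuc (dist_path N A j l)" using dist_path_arc[of l N i A j] i l 3 by simp
    finally have "(-1) ^ k * lap_pow N A k l j \<ge> 0" using nonneg by simp
    thus ?thesis
      using 3 by (simp add: laplacian_entry_off_diag mult.left_commute[of _ "A i l"])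
  qed
qed

lemma lap_pow_sign_nonneg:
  assumes A_nonneg: "\<And>i j. i < N \<Longrightarrow> j < N \<Longrightarrow> A i j \<ge> 0"
  shows "i < N \<Longrightarrow> enat k \<le> dist_path N A j i \<Longrightarrow> (-1) ^ k * lap_pow N A k i j \<ge> 0"
proof (induction k arbitrary: i)
  case (Suc k)
  have "(-1) ^ Suc k * lap_pow N A (Suc k) i j
      = (\<Sum>l<N. (-1) ^ Suc k * (laplacian_entry N A i l * lap_pow N A k l j))"
    by (simp add: sum_distrib_left)
  also have "\<dots> \<ge> 0"
    using lap_pow_Suc_term_nonneg[OF A_nonneg Suc.prems(1) _ Suc.prems(2)] Suc.IH
    by (intro sum_nonneg) simp
  finally show ?case .
qed simp

text \<open>Along a shortest path only the off-diagonal entries \<open>-A\<^sub>i\<^sub>l < 0\<close> of arcs contribute, so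
  no cancellation occurs.\<close>

lemma lap_pow_sign_at_dist:
  assumes A_nonneg: "\<And>i j. i < N \<Longrightarrow> j < N \<Longrightarrow> A i j \<ge> 0"
    and A_noloop: "\<And>i. i < N \<Longrightarrow> A i i = 0"
  shows "i < N \<Longrightarrow> dist_path N A j i = enat k \<Longrightarrow> (-1) ^ k * lap_pow N A k i j > 0"
proof (induction k arbitrary: i)
  case 0
  then show ?case using dist_path_eq_0D[of N A j i] by (simp add: zero_enat_def[symmetric])
next
  case (Suc k)
  define t where "t l = (-1) ^ Suc k * (laplacian_entry N A i l * lap_pow N A k l j)" for l
  obtain l0 where l0: "l0 < N" "A i l0 > 0" "dist_path N A j l0 = enat k"
    using Suc.prems(2) by (rule dist_path_predecessor)
  moreover have "l0 \<noteq> i" using l0 A_noloop[OF Suc.prems(1)] by auto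
  ultimately have "0 < t l0"
    using Suc.IH[of l0] by (simp add: t_def laplacian_entry_off_diag mult.left_commute[of _ "A i l0"])
  also have "t l0 \<le> sum t {..<N}"
    using l0(1) lap_pow_Suc_term_nonneg[OF A_nonneg Suc.prems(1) _ _ lap_pow_sign_nonneg[OF A_nonneg]]
      Suc.prems(2)
    by (intro member_le_sum) (auto simp: t_def)
  also have "sum t {..<N} = (-1) ^ Suc k * lap_pow N A (Suc k) i j"
    unfolding t_def by (simp add: sum_distrib_left)
  finally show ?case .
qed

section \<open>The closed loop over rational functions\<close>

definition feedback_matrix :: "nat \<Rightarrow> (nat \<Rightarrow> nat \<Rightarrow> real) \<Rightarrow> ratfun \<Rightarrow> ratfun mat" where
  "feedback_matrix N A M = 1\<^sub>m N + M \<cdot>\<^sub>m map_mat const_rf (laplacian N A)"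

lemma feedback_matrix_carrier: "feedback_matrix N A M \<in> carrier_mat N N"
  by (simp add: feedback_matrix_def laplacian_def)

lemma feedback_matrix_mult_vec_index:
  assumes v: "v \<in> carrier_vec N" and i: "i < N"
  shows "(feedback_matrix N A M *\<^sub>v v) $ i
         = v $ i + M * (\<Sum>l<N. const_rf (laplacian_entry N A i l) * v $ l)"
proof -
  have "(feedback_matrix N A M *\<^sub>v v) $ i = (\<Sum>l<N. feedback_matrix N A M $$ (i, l) * v $ l)"
    using v i feedback_matrix_carrier[of N A M]
    by (simp add: scalar_prod_def atLeast0LessThan)
  also have "\<dots> = (\<Sum>l<N. (if i = l then v $ l else 0) + M * (const_rf (laplacian_entry N A i l) * v $ l))"
    using i by (intro sum.cong) (auto simp: feedback_matrix_def laplacian_def laplacian_entry_def algebra_simps)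
  also have "\<dots> = v $ i + M * (\<Sum>l<N. const_rf (laplacian_entry N A i l) * v $ l)"
    using i by (simp add: sum.distrib sum_distrib_left)
  finally show ?thesis .
qed

text \<open>Take an entry \<open>w\<^sub>j \<noteq> 0\<close> of least relative degree \<open>\<mu>\<close>: the perturbation term has
  relative degree at least \<open>\<mu> + 1\<close>, so \<open>w\<^sub>j\<close> inherits the bound of \<open>f\<^sub>j\<close> if \<open>e \<le> \<mu> + 1\<close>,
  and would satisfy \<open>\<mu> + 1 \<le> \<mu>\<close> otherwise.\<close>

lemma rel_degree_ge_solution:
  fixes m :: ratfun and C :: "nat \<Rightarrow> nat \<Rightarrow> ratfun" and w f :: "nat \<Rightarrow> ratfun"
  assumes m: "rel_degree_ge m 1" and C: "\<And>i l. rel_degree_ge (C i l) 0"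
    and f: "\<And>i. i < N \<Longrightarrow> rel_degree_ge (f i) e"
    and eq: "\<And>i. i < N \<Longrightarrow> w i + m * (\<Sum>l<N. C i l * w l) = f i"
    and i: "i < N"
  shows "rel_degree_ge (w i) e"
proof (cases "\<forall>l<N. w l = 0")
  case False
  define W where "W = {l. l < N \<and> w l \<noteq> 0}"
  have "finite W" "W \<noteq> {}" using False by (auto simp: W_def)
  define \<mu> where "\<mu> = Min ((\<lambda>l. rel_degree (w l)) ` W)"
  have "\<mu> \<in> (\<lambda>l. rel_degree (w l)) ` W"
    unfolding \<mu>_def using \<open>finite W\<close> \<open>W \<noteq> {}\<close> by (intro Min_in) auto
  then obtain j where j: "j \<in> W" "\<mu> = rel_degree (w j)" by auto
  have w_ge: "rel_degree_ge (w l) \<mu>" if "l < N" for l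
  proof (cases "w l = 0")
    case False
    hence "l \<in> W" using that by (simp add: W_def)
    thus ?thesis using \<open>finite W\<close> by (simp add: rel_degree_ge_def \<mu>_def)
  qed simp
  have jN: "j < N" "w j \<noteq> 0" using j by (auto simp: W_def)
  have "rel_degree_ge (\<Sum>l<N. C j l * w l) (0 + \<mu>)"
    using rel_degree_ge_mult[OF C w_ge] by (intro rel_degree_ge_sum) auto
  hence pert: "rel_degree_ge (m * (\<Sum>l<N. C j l * w l)) (1 + \<mu>)"
    using rel_degree_ge_mult[OF m] by simp
  have wj: "w j = f j - m * (\<Sum>l<N. C j l * w l)" using eq[OF jN(1)] by (simp add: algebra_simps)
  show ?thesis
  proof (cases "e \<le> 1 + \<mu>")
    case True
    hence "rel_degree_ge (w j) e"
      unfolding wj by (intro rel_degree_ge_diff f jN rel_degree_ge_mono[OF pert])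
    hence "e \<le> \<mu>" using rel_degree_geD jN j(2) by blast
    thus ?thesis using w_ge[OF i] rel_degree_ge_mono by blast
  next
    case False
    hence "rel_degree_ge (w j) (1 + \<mu>)"
      unfolding wj by (intro rel_degree_ge_diff pert rel_degree_ge_mono[OF f[OF jN(1)]]) simp
    hence "1 + \<mu> \<le> \<mu>" using rel_degree_geD jN j(2) by blast
    thus ?thesis by simp
  qed
qed (use i in simp)

lemma mat_inverse_mult_vec:
  assumes "X \<in> carrier_mat n n" "mat_inverse X = Some Y" "v \<in> carrier_vec n"
  shows "X *\<^sub>v (Y *\<^sub>v v) = v"
  using mat_inverse(2)[OF assms(1,2)] assms
  by (metis assoc_mult_mat_vec one_mult_mat_vec)

lemma feedback_matrix_invertible:
  assumes "rel_degree_ge M 1"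
  obtains Xi where "mat_inverse (feedback_matrix N A M) = Some Xi"
proof -
  let ?X = "feedback_matrix N A M"
  have "det ?X \<noteq> 0"
  proof
    assume "det ?X = 0"
    then obtain v where v: "v \<in> carrier_vec N" "v \<noteq> 0\<^sub>v N" "?X *\<^sub>v v = 0\<^sub>v N"
      using det_0_iff_vec_prod_zero_field[OF feedback_matrix_carrier] by blast
    have eq: "v $ i + M * (\<Sum>l<N. const_rf (laplacian_entry N A i l) * v $ l) = 0" if "i < N" for i
      using feedback_matrix_mult_vec_index[OF v(1) that, where A = A and M = M] v(3) that by simp
    have "rel_degree_ge (v $ i) e" if "i < N" for i e
      by (rule rel_degree_ge_solution[where C = "\<lambda>i l. const_rf (laplacian_entry N A i l)"
            and f = "\<lambda>_. 0", OF assms rel_degree_ge_const_rf]) (use eq that in simp_all)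
    hence "v $ i = 0" if "i < N" for i
      using rel_degree_geD[of "v $ i" "rel_degree (v $ i) + 1"] that by fastforce
    hence "v = 0\<^sub>v N" using v(1) by (intro eq_vecI) auto
    thus False using v(2) by simp
  qed
  hence "?X \<in> Units (ring_mat TYPE(ratfun) N ())"
    by (rule det_non_zero_imp_unit[OF feedback_matrix_carrier])
  thus ?thesis using mat_inverse(1)[OF feedback_matrix_carrier[of N A M], of "()"] that
    by (cases "mat_inverse ?X") auto
qed

text \<open>The remainder \<open>r\<^sub>K = w - \<Sum>k<K. (-1)\<^sup>k m\<^sup>k\<^sup>+\<^sup>1 z\<^sub>k\<close> of the truncated Neumann series
  satisfies \<open>r\<^sub>K\<^sub>+\<^sub>1 = -m C r\<^sub>K\<close>.\<close>

lemma rel_degree_ge_neumann_remainder: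
  fixes m :: ratfun and w :: "nat \<Rightarrow> ratfun" and z C :: "nat \<Rightarrow> nat \<Rightarrow> real"
  assumes m: "m \<noteq> 0" "rel_degree m = \<chi>" "1 \<le> \<chi>"
    and z: "\<And>k i. z (Suc k) i = (\<Sum>l<N. C i l * z k l)"
    and eq: "\<And>i. i < N \<Longrightarrow> w i + m * (\<Sum>l<N. const_rf (C i l) * w l) = m * const_rf (z 0 i)"
  shows "i < N \<Longrightarrow>
    rel_degree_ge (w i - (\<Sum>k<K. (-1) ^ k * m ^ (k + 1) * const_rf (z k i))) ((int K + 1) * \<chi>)"
proof (induction K arbitrary: i)
  case 0
  have "rel_degree_ge (m * const_rf (z 0 i)) (\<chi> + 0)" for i
    using m by (intro rel_degree_ge_mult rel_degree_ge_const_rf) (simp add: rel_degree_ge_def)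
  moreover have "rel_degree_ge m 1" using m by (simp add: rel_degree_ge_def)
  ultimately show ?case
    using rel_degree_ge_solution[OF _ rel_degree_ge_const_rf _ eq 0] by simp
next
  case (Suc K)
  define g where "g k i = (-1) ^ k * m ^ (k + 1) * const_rf (z k i)" for k i
  define r where "r i = w i - (\<Sum>k<K. g k i)" for i
  have g_Suc: "g (Suc k) i = - m * (\<Sum>l<N. const_rf (C i l) * g k l)" for k i
    unfolding g_def z const_rf_sum const_rf_mult
    by (simp add: sum_distrib_left sum_distrib_right algebra_simps)
  have "(\<Sum>k<Suc K. g k i) = g 0 i + (\<Sum>k<K. g (Suc k) i)" by (rule sum.lessThan_Suc_shift)
  also have "(\<Sum>k<K. g (Suc k) i) = - m * (\<Sum>l<N. const_rf (C i l) * (\<Sum>k<K. g k l))"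
    unfolding g_Suc sum_distrib_left by (subst sum.swap) (simp add: sum_negf)
  finally have rem: "w i - (\<Sum>k<Suc K. g k i) = - m * (\<Sum>l<N. const_rf (C i l) * r l)"
    using eq[OF Suc.prems]
    by (simp add: g_def r_def right_diff_distrib sum_subtractf algebra_simps)
  have "rel_degree_ge (- m * (\<Sum>l<N. const_rf (C i l) * r l)) (\<chi> + (0 + (int K + 1) * \<chi>))"
    using Suc.IH m unfolding r_def g_def
    by (intro rel_degree_ge_mult rel_degree_ge_sum rel_degree_ge_const_rf)
      (auto simp: rel_degree_ge_def rel_degree_uminus)
  hence "rel_degree_ge (w i - (\<Sum>k<Suc K. g k i)) ((int (Suc K) + 1) * \<chi>)"
    unfolding rem by (simp add: algebra_simps)
  thus ?case by (simp add: g_def)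
qed

section \<open>The transfer function from a set of sources\<close>

lemma sum_lap_pow_below_min_dist:
  assumes "\<And>i j. i < N \<Longrightarrow> j < N \<Longrightarrow> A i j \<ge> 0"
    and "ov < N" "\<And>c. c \<in> S \<Longrightarrow> enat \<delta> \<le> dist_path N A c ov" "k < \<delta>"
  shows "(\<Sum>c\<in>S. lap_pow N A k ov c) = 0"
  using assms lap_pow_eq_0_below_dist[of N A ov k]
  by (intro sum.neutral) (meson enat_ord_simps(2) order_less_le_trans)

lemma sum_lap_pow_sign_at_min_dist:
  assumes "\<And>i j. i < N \<Longrightarrow> j < N \<Longrightarrow> A i j \<ge> 0" "\<And>i. i < N \<Longrightarrow> A i i = 0"
    and "finite S" "ov < N" "\<And>c. c \<in> S \<Longrightarrow> enat \<delta> \<le> dist_path N A c ov"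
    and "c0 \<in> S" "dist_path N A c0 ov = enat \<delta>"
  shows "(-1) ^ \<delta> * (\<Sum>c\<in>S. lap_pow N A \<delta> ov c) > 0"
proof -
  have "0 < (-1) ^ \<delta> * lap_pow N A \<delta> ov c0"
    using lap_pow_sign_at_dist assms by blast
  also have "\<dots> \<le> (\<Sum>c\<in>S. (-1) ^ \<delta> * lap_pow N A \<delta> ov c)"
    using assms lap_pow_sign_nonneg[of N A ov \<delta>] by (intro member_le_sum) auto
  finally show ?thesis by (simp add: sum_distrib_left)
qed

lemma transfer_entry_rel_degree:
  assumes A_nonneg: "\<And>i j. i < N \<Longrightarrow> j < N \<Longrightarrow> A i j \<ge> 0"
    and A_noloop: "\<And>i. i < N \<Longrightarrow> A i i = 0"
    and S: "S \<subseteq> {..<N}" and ov: "ov < N"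
    and M: "M \<noteq> 0" "rel_degree M = \<chi>" "1 \<le> \<chi>"
    and \<delta>: "\<And>c. c \<in> S \<Longrightarrow> enat \<delta> \<le> dist_path N A c ov" "c0 \<in> S" "dist_path N A c0 ov = enat \<delta>"
    and w: "w \<in> carrier_vec N"
      "feedback_matrix N A M *\<^sub>v w = M \<cdot>\<^sub>v vec N (\<lambda>i. if i \<in> S then 1 else 0)"
  shows "w $ ov \<noteq> 0 \<and> rel_degree (w $ ov) = (int \<delta> + 1) * \<chi>"
proof -
  have "finite S" using S finite_subset by blast
  define z where "z k i = (\<Sum>c\<in>S. lap_pow N A k i c)" for k i
  have z_Suc: "z (Suc k) i = (\<Sum>l<N. laplacian_entry N A i l * z k l)" for k i
    unfolding z_def by (simp add: sum_distrib_left sum.swap[of _ S])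
  have "z 0 i = (if i \<in> S then 1 else 0)" for i
    unfolding z_def using \<open>finite S\<close> by (simp add: sum.delta)
  hence eq: "w $ i + M * (\<Sum>l<N. const_rf (laplacian_entry N A i l) * w $ l) = M * const_rf (z 0 i)"
    if "i < N" for i
    using feedback_matrix_mult_vec_index[OF w(1) that, where A = A and M = M] w(2) that
    by (simp split: if_splits)
  define g where "g = (-1) ^ \<delta> * M ^ (\<delta> + 1) * const_rf (z \<delta> ov)"
  have "(\<Sum>k<Suc \<delta>. (-1) ^ k * M ^ (k + 1) * const_rf (z k ov)) = g"
    using sum_lap_pow_below_min_dist[OF A_nonneg ov \<delta>(1)] by (simp add: g_def z_def)
  hence rem: "rel_degree_ge (w $ ov - g) ((int (Suc \<delta>) + 1) * \<chi>)"
    using rel_degree_ge_neumann_remainder[OF M z_Suc eq ov, of "Suc \<delta>"] by simp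
  have "z \<delta> ov \<noteq> 0"
    using sum_lap_pow_sign_at_min_dist[OF A_nonneg A_noloop \<open>finite S\<close> ov \<delta>] by (auto simp: z_def)
  hence "g \<noteq> 0" and g_deg: "rel_degree g = (int \<delta> + 1) * \<chi>"
    using M by (simp_all add: g_def rel_degree_mult rel_degree_power rel_degree_const_rf
        rel_degree_uminus algebra_simps)
  moreover have "w $ ov = g + (w $ ov - g)" by simp
  ultimately show ?thesis
    using rel_degree_add_dominated[OF \<open>g \<noteq> 0\<close> rem] M(3) by (simp add: algebra_simps)
qed

theorem mainTheorem11:
  fixes N :: nat and A :: "nat \<Rightarrow> nat \<Rightarrow> real"
    and a b p q :: "real poly" and S :: "nat set" and ov :: nat
  assumes A_nonneg: "\<And>i j. i < N \<Longrightarrow> j < N \<Longrightarrow> A i j \<ge> 0"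
    and A_noloop: "\<And>i. i < N \<Longrightarrow> A i i = 0"
    and nz: "a \<noteq> 0" "b \<noteq> 0" "p \<noteq> 0" "q \<noteq> 0"
    and S_sub: "S \<subseteq> {..<N}" and S_ne: "S \<noteq> {}"
    and o_in: "ov < N"
    and reach: "\<exists>c\<in>S. dist_path N A c ov < \<infinity>"
    and proper: "degree (b * q) < degree (a * p)"
  shows "let M = Fract (b * q) (a * p);
             L = map_mat const_rf (laplacian N A);
             X = 1\<^sub>m N + M \<cdot>\<^sub>m L;
             u = vec N (\<lambda>i. if i \<in> S then 1 else 0);
             \<chi> = degree (a * p) - degree (b * q);
             \<delta>min = Min ((\<lambda>c. dist_path N A c ov) ` S)
         in \<exists>Xi. mat_inverse X = Some Xi \<and>
               (let T = ((Xi *\<^sub>v (M \<cdot>\<^sub>v u)) $ ov)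
                in T \<noteq> 0 \<and> rel_degree T = int ((the_enat \<delta>min + 1) * \<chi>))"
proof -
  define M where "M = Fract (b * q) (a * p)"
  define u :: "ratfun vec" where "u = vec N (\<lambda>i. if i \<in> S then 1 else 0)"
  define \<chi> where "\<chi> = degree (a * p) - degree (b * q)"
  have M: "M \<noteq> 0" "rel_degree M = int \<chi>" "1 \<le> int \<chi>"
    using nz proper by (auto simp: M_def \<chi>_def Fract_eq_0_iff rel_degree_Fract of_nat_diff)
  hence "rel_degree_ge M 1" by (simp add: rel_degree_ge_def)
  then obtain Xi where Xi: "mat_inverse (feedback_matrix N A M) = Some Xi"
    by (rule feedback_matrix_invertible)
  have "Xi \<in> carrier_mat N N" using mat_inverse(2)[OF feedback_matrix_carrier Xi] by blast
  hence w: "Xi *\<^sub>v (M \<cdot>\<^sub>v u) \<in> carrier_vec N"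
    "feedback_matrix N A M *\<^sub>v (Xi *\<^sub>v (M \<cdot>\<^sub>v u)) = M \<cdot>\<^sub>v u"
    using mat_inverse_mult_vec[OF feedback_matrix_carrier Xi] by (auto simp: u_def)
  have "finite S" using S_sub finite_subset by blast
  obtain \<delta> c0 where \<delta>: "Min ((\<lambda>c. dist_path N A c ov) ` S) = enat \<delta>"
    "\<And>c. c \<in> S \<Longrightarrow> enat \<delta> \<le> dist_path N A c ov" "c0 \<in> S" "dist_path N A c0 ov = enat \<delta>"
    using Min_dist_path_attained[OF \<open>finite S\<close> reach] by blast
  have "(Xi *\<^sub>v (M \<cdot>\<^sub>v u)) $ ov \<noteq> 0 \<and> rel_degree ((Xi *\<^sub>v (M \<cdot>\<^sub>v u)) $ ov) = (int \<delta> + 1) * \<chi>"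
    using transfer_entry_rel_degree[OF A_nonneg A_noloop S_sub o_in M \<delta>(2-4) w[unfolded u_def]]
    by (simp add: u_def)
  thus ?thesis
    using Xi \<delta>(1) unfolding Let_def feedback_matrix_def M_def u_def \<chi>_def[symmetric]
    by (simp add: algebra_simps)
qed

end
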